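(* Let $\Theta$ be a finite set, $b$ a belief function on $\Theta$ with mass function $m_b$, and $\emptyset \subsetneq A \subseteq \Theta$. The mass vector of the $L_2$ conditional belief function of $b$ with respect to $A$ in the mass space, namely the vector with entries $m_b(B) + \frac{1-b(A)}{2^{|A|}-1}$ for $\emptyset\subsetneq B\subseteq A$ and $0$ elsewhere, is the center of mass $\frac{1}{2^{|A|}-1}\sum_{\emptyset\subsetneq B\subseteq A}\vec{m}[b]|_{L_1}^B A$ of the simplex $\mathcal{M}_{L_1,A}[b]=Cl(\vec{m}[b]|_{L_1}^B A,\ \emptyset\subsetneq B\subseteq A)$ of $L_1$ conditional belief functions of $b$ with respect to $A$ in the mass space, where the vertex $\vec{m}[b]|_{L_1}^B A$ is the mass vector $\vec{m}_a\in\mathcal{M}_A$ with $m_a(B)=m_b(B)+1-b(A)$ and $m_a(X)=m_b(X)$ for all $\emptyset\subsetneq X\subsetneq A$, $X\neq B$.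
   Context: A mass function on a finite set $\Theta$ is $m:2^\Theta\to[0,1]$ with $m(\emptyset)=0$ and $\sum_{A\subseteq\Theta} m(A)=1$; the associated belief function is $b(A)=\sum_{B\subseteq A} m_b(B)$. The mass vector of $b$ is $\vec{m}_b=[m_b(B)]_{\emptyset\subsetneq B\subseteq\Theta}\in\mathbb{R}^{2^{|\Theta|}-1}$. For $\emptyset\subsetneq A\subseteq\Theta$, $\mathcal{M}_A$ is the set of mass vectors of belief functions all of whose focal elements are subsets of $A$. The $L_2$ conditional belief function is the minimizer of $\|\vec{m}_b-\vec{m}_a\|_{L_2}$ (Euclidean distance of mass vectors) over $\vec{m}_a\in\mathcal{M}_A$, and the $L_1$ conditional belief functions are the minimizers of $\sum_{\emptyset\subsetneq B\subseteq\Theta}|m_b(B)-m_a(B)|$ over $\vec{m}_a\in\mathcal{M}_A$. $Cl(\cdot)$ denotes convex hull. *)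

theory Defs
  imports "HOL-Analysis.Analysis"
begin

text \<open>Mass functions / mass vectors on a finite frame Theta are represented as
  functions of type 'a set => real; a mass vector is indexed by the nonempty subsets
  of Theta and we use the convention that it is 0 at every other set.\<close>

definition mass_function :: "'a set \<Rightarrow> ('a set \<Rightarrow> real) \<Rightarrow> bool" where
  "mass_function \<Theta> m \<longleftrightarrow>
     m {} = 0 \<and> (\<forall>B. 0 \<le> m B) \<and> (\<forall>B. \<not> B \<subseteq> \<Theta> \<longrightarrow> m B = 0)
     \<and> (\<Sum>B\<in>Pow \<Theta>. m B) = 1"

definition belief :: "('a set \<Rightarrow> real) \<Rightarrow> 'a set \<Rightarrow> real" where
  "belief m A = (\<Sum>B\<in>Pow A. m B)"

definition mass_space_A :: "'a set \<Rightarrow> 'a set \<Rightarrow> ('a set \<Rightarrow> real) set" where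
  "mass_space_A \<Theta> A = {v. mass_function \<Theta> v \<and> (\<forall>X. \<not> X \<subseteq> A \<longrightarrow> v X = 0)}"

definition L1_vertex ::
  "'a set \<Rightarrow> ('a set \<Rightarrow> real) \<Rightarrow> 'a set \<Rightarrow> 'a set \<Rightarrow> ('a set \<Rightarrow> real)" where
  "L1_vertex \<Theta> m A B = (THE v. v \<in> mass_space_A \<Theta> A \<and>
      v B = m B + 1 - belief m A \<and>
      (\<forall>X. X \<noteq> {} \<and> X \<subset> A \<and> X \<noteq> B \<longrightarrow> v X = m X))"

end

theory Submission
  imports Defs
begin

text \<open>A mass vector is determined by its values off any single set, because its total mass
  is 1. Hence the vertex of the L1 simplex indexed by B is m restricted to the nonempty subsets
  of A with the missing mass 1 - b(A) added at B. Averaging these vertices over the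
  2^|A| - 1 choices of B spreads the missing mass uniformly, which gives the L2 conditional.\<close>

lemma mass_function_eqI:
  assumes "finite \<Theta>" and u: "mass_function \<Theta> u" and v: "mass_function \<Theta> v"
    and agree: "\<And>X. X \<noteq> A \<Longrightarrow> u X = v X"
  shows "u = v"
proof
  fix X
  show "u X = v X"
  proof (cases "X = A")
    case False
    then show ?thesis by (rule agree)
  next
    case True
    show ?thesis
    proof (cases "A \<subseteq> \<Theta>")
      case False
      then show ?thesis using u v True unfolding mass_function_def by auto
    next
      case A: True
      have split: "(\<Sum>Y\<in>Pow \<Theta>. w Y) = w A + (\<Sum>Y\<in>Pow \<Theta> - {A}. w Y)" for w :: "'a set \<Rightarrow> real"
        by (rule sum.remove) (use \<open>finite \<Theta>\<close> A in auto)
      have "(\<Sum>Y\<in>Pow \<Theta> - {A}. u Y) = (\<Sum>Y\<in>Pow \<Theta> - {A}. v Y)"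
        by (rule sum.cong) (use agree in auto)
      moreover have "(\<Sum>Y\<in>Pow \<Theta>. u Y) = (\<Sum>Y\<in>Pow \<Theta>. v Y)"
        using u v by (simp add: mass_function_def)
      ultimately show ?thesis using split[of u] split[of v] unfolding True by linarith
    qed
  qed
qed

lemma belief_le_one:
  assumes "finite \<Theta>" and "mass_function \<Theta> m" and "A \<subseteq> \<Theta>"
  shows "belief m A \<le> 1"
proof -
  have "belief m A \<le> (\<Sum>B\<in>Pow \<Theta>. m B)"
    unfolding belief_def
    by (rule sum_mono2) (use assms in \<open>auto simp: mass_function_def\<close>)
  then show ?thesis using assms(2) by (simp add: mass_function_def)
qed

definition L1_vertex_explicit :: "('a set \<Rightarrow> real) \<Rightarrow> 'a set \<Rightarrow> 'a set \<Rightarrow> 'a set \<Rightarrow> real" where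
  "L1_vertex_explicit m A B X =
     (if X \<noteq> {} \<and> X \<subseteq> A then m X + (if X = B then 1 - belief m A else 0) else 0)"

lemma L1_vertex_explicit_in_mass_space_A:
  assumes fin: "finite \<Theta>" and mf: "mass_function \<Theta> m" and A: "A \<subseteq> \<Theta>"
    and B: "B \<noteq> {}" "B \<subseteq> A"
  shows "L1_vertex_explicit m A B \<in> mass_space_A \<Theta> A"
proof -
  let ?w = "L1_vertex_explicit m A B"
  have "finite A" using fin A by (rule finite_subset[rotated])
  have "(\<Sum>X\<in>Pow \<Theta>. ?w X) = (\<Sum>X\<in>Pow A. ?w X)"
    by (rule sum.mono_neutral_right) (use fin A in \<open>auto simp: L1_vertex_explicit_def\<close>)
  also have "\<dots> = (\<Sum>X\<in>Pow A. m X + (if X = B then 1 - belief m A else 0))"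
    by (rule sum.cong) (use mf B in \<open>auto simp: L1_vertex_explicit_def mass_function_def\<close>)
  also have "\<dots> = 1"
    using \<open>finite A\<close> B by (simp add: sum.distrib belief_def)
  finally have "(\<Sum>X\<in>Pow \<Theta>. ?w X) = 1" .
  moreover have "0 \<le> ?w X" for X
    using mf belief_le_one[OF fin mf A] by (auto simp: L1_vertex_explicit_def mass_function_def)
  ultimately show ?thesis
    using A by (auto simp: mass_space_A_def mass_function_def L1_vertex_explicit_def)
qed

lemma L1_vertex_eq_explicit:
  assumes fin: "finite \<Theta>" and mf: "mass_function \<Theta> m" and A: "A \<subseteq> \<Theta>"
    and B: "B \<noteq> {}" "B \<subseteq> A"
  shows "L1_vertex \<Theta> m A B = L1_vertex_explicit m A B"
  unfolding L1_vertex_def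
proof (rule the_equality)
  show "L1_vertex_explicit m A B \<in> mass_space_A \<Theta> A \<and>
      L1_vertex_explicit m A B B = m B + 1 - belief m A \<and>
      (\<forall>X. X \<noteq> {} \<and> X \<subset> A \<and> X \<noteq> B \<longrightarrow> L1_vertex_explicit m A B X = m X)"
    using L1_vertex_explicit_in_mass_space_A[OF assms] B
    by (auto simp: L1_vertex_explicit_def)
next
  fix v
  assume v: "v \<in> mass_space_A \<Theta> A \<and> v B = m B + 1 - belief m A \<and>
      (\<forall>X. X \<noteq> {} \<and> X \<subset> A \<and> X \<noteq> B \<longrightarrow> v X = m X)"
  show "v = L1_vertex_explicit m A B"
  proof (rule mass_function_eqI[OF fin, where A = A])
    show "mass_function \<Theta> v" using v by (simp add: mass_space_A_def)
    show "mass_function \<Theta> (L1_vertex_explicit m A B)"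
      using L1_vertex_explicit_in_mass_space_A[OF assms] by (simp add: mass_space_A_def)
    show "v X = L1_vertex_explicit m A B X" if "X \<noteq> A" for X
      using v that by (auto simp: mass_space_A_def mass_function_def L1_vertex_explicit_def)
  qed
qed

lemma sum_L1_vertex_explicit:
  assumes "finite A"
  shows "(\<Sum>B\<in>Pow A - {{}}. L1_vertex_explicit m A B X) =
    (if X \<noteq> {} \<and> X \<subseteq> A then (2 ^ card A - 1) * m X + (1 - belief m A) else 0)"
proof -
  have "real (card (Pow A - {{}})) = 2 ^ card A - 1"
    using assms by (simp add: card_Diff_singleton card_Pow of_nat_diff)
  then show ?thesis
    using assms by (simp add: L1_vertex_explicit_def sum.distrib sum.delta')
qed

theorem theorem4:
  fixes \<Theta> A :: "'a set" and m :: "'a set \<Rightarrow> real"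
  assumes "finite \<Theta>" and "mass_function \<Theta> m"
    and "A \<noteq> {}" and "A \<subseteq> \<Theta>"
  shows "(\<lambda>X. if X \<noteq> {} \<and> X \<subseteq> A
                then m X + (1 - belief m A) / (2 ^ card A - 1) else 0)
         = (\<lambda>X. (1 / (2 ^ card A - 1)) * (\<Sum>B\<in>Pow A - {{}}. L1_vertex \<Theta> m A B X))"
proof
  fix X
  have "finite A" using assms(1,4) by (rule finite_subset[rotated])
  then have "card A \<ge> 1" using assms(3) by (simp add: Suc_le_eq card_gt_0_iff)
  then have N: "(2::real) ^ card A - 1 > 0"
    using power_increasing[of 1 "card A" "2::real"] by simp
  have "(\<Sum>B\<in>Pow A - {{}}. L1_vertex \<Theta> m A B X) = (\<Sum>B\<in>Pow A - {{}}. L1_vertex_explicit m A B X)"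
    by (rule sum.cong) (use L1_vertex_eq_explicit[OF assms(1,2,4)] in auto)
  then show "(if X \<noteq> {} \<and> X \<subseteq> A then m X + (1 - belief m A) / (2 ^ card A - 1) else 0)
      = (1 / (2 ^ card A - 1)) * (\<Sum>B\<in>Pow A - {{}}. L1_vertex \<Theta> m A B X)"
    using N by (simp add: sum_L1_vertex_explicit[OF \<open>finite A\<close>] field_simps)
qed

end
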